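(* For every prime power $q$, the number $J_{\mathrm{H}}(q)$ of distinct $j$-invariants of Hessian curves over $\mathbb{F}_q$ is $$J_{\mathrm{H}}(q)=\begin{cases}q-1,& q\equiv0\pmod3,\\ \lfloor (q+11)/12\rfloor,& q\equiv1\pmod3,\\ \lfloor q/2\rfloor,& q\equiv2\pmod3.\end{cases}$$
   Context: For $u\in\mathbb{F}_q$ with $u^3\ne27$, the Hessian curve $E_{\mathrm{H},u}$ is the elliptic curve $X^3+Y^3+1=uXY$, with $j(E_{\mathrm{H},u})=\left(\frac{u(u^3+216)}{u^3-27}\right)^3$. $J_{\mathrm{H}}(q)=\#\{j(E_{\mathrm{H},u}): u\in\mathbb{F}_q,\ u^3\ne27\}$. *)

theory Defs
  imports Main
begin

text \<open>j-invariant of the Hessian curve X^3+Y^3+1 = uXY over a field.\<close>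
definition hessian_j :: "'a::field \<Rightarrow> 'a" where
  "hessian_j u = (u * (u^3 + 216) / (u^3 - 27))^3"

definition J_H :: "'a::{finite,field} itself \<Rightarrow> nat" where
  "J_H _ = card (hessian_j ` {u :: 'a. u^3 \<noteq> 27})"

end

theory Submission
  imports Defs
begin

(*
  Write t(u) = u (u^3 + 216) / (u^3 - 27), so that hessian_j u = t(u)^3, and let
  D = {u. u^3 \<noteq> 27}.  The count splits according to the characteristic and to
  whether F_q contains a primitive cube root of unity w; both conditions are read
  off from q mod 3 by counting orbits of maps of order 3 (an orbit argument gives
  |S| = #fixed points mod 3).

  * char 3:  216 = 27 = 0, so j(u) = u^3 on D = F_q - {0}, and cubing is injective.
  * q = 2 mod 3 (no w):  cubing is injective, and the fibres of t on D are the
    pairs {u, rho_1 u} (or {u, 6 - u}), except a single point in characteristic 2.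
  * q = 1 mod 3:  the fibre of j through u is the set of all m x with m^3 = 1 and
    x in the t-fibre {u, rho_1 u, rho_w u, rho_w2 u}; away from j = 0 and j = 1728
    it has 12 elements, while the exceptional fibres are counted explicitly.
  Here rho_a u = 3a (u + 6a) / (u - 3a) is the second coordinate of the curve
  hessian_L a u v = 0, and the condition t v = t u factors into such curves.
*)

lemma card_constant_fibres:
  assumes "finite S" and "\<And>u. u \<in> S \<Longrightarrow> card {v\<in>S. f v = f u} = k"
  shows "card S = k * card (f ` S)"
proof -
  have S: "S = (\<Union>c\<in>f ` S. {v\<in>S. f v = c})" by auto
  have "card S = (\<Sum>c\<in>f ` S. card {v\<in>S. f v = c})"
    by (subst S, rule card_UN_disjoint) (use assms(1) in auto)
  also have "\<dots> = (\<Sum>c\<in>f ` S. k)"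
    by (rule sum.cong) (auto simp: assms(2))
  finally show ?thesis by simp
qed

lemma card_fibres_two_except_one:
  assumes "finite S" "x \<in> S" and single: "{v\<in>S. f v = f x} = {x}"
    and "\<And>u. u \<in> S \<Longrightarrow> u \<noteq> x \<Longrightarrow> card {v\<in>S. f v = f u} = 2"
  shows "card S + 1 = 2 * card (f ` S)"
proof -
  define S' where "S' = S - {x}"
  have other: "f u \<noteq> f x" if "u \<in> S'" for u
    using that single by (auto simp: S'_def)
  have "card S' = 2 * card (f ` S')"
  proof (rule card_constant_fibres)
    fix u assume "u \<in> S'"
    then have "{v\<in>S'. f v = f u} = {v\<in>S. f v = f u}"
      using other[of u] by (auto simp: S'_def)
    then show "card {v\<in>S'. f v = f u} = 2" using assms(4) \<open>u \<in> S'\<close> by (simp add: S'_def)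
  qed (use assms(1) in \<open>simp add: S'_def\<close>)
  moreover have "f ` S = insert (f x) (f ` S')" using assms(2) by (auto simp: S'_def)
  moreover have "f x \<notin> f ` S'" using other by force
  moreover have "card S = card S' + 1"
    using assms(1,2) card_Suc_Diff1 by (fastforce simp: S'_def)
  ultimately show ?thesis using assms(1) by (simp add: S'_def)
qed

lemma card_fibres_outside:
  assumes "finite S" and "\<And>u. u \<in> S \<Longrightarrow> f u \<notin> B \<Longrightarrow> card {v\<in>S. f v = f u} = k"
  shows "card S = k * card (f ` S - B) + card {u\<in>S. f u \<in> B}"
proof -
  define R where "R = {u\<in>S. f u \<notin> B}"
  have "card R = k * card (f ` R)"
  proof (rule card_constant_fibres)
    fix u assume "u \<in> R"
    then have "{v\<in>R. f v = f u} = {v\<in>S. f v = f u}" by (auto simp: R_def)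
    then show "card {v\<in>R. f v = f u} = k" using assms(2) \<open>u \<in> R\<close> by (simp add: R_def)
  qed (use assms(1) in \<open>simp add: R_def\<close>)
  moreover have "f ` R = f ` S - B" by (auto simp: R_def)
  moreover have "card S = card R + card {u\<in>S. f u \<in> B}"
    using assms(1) by (subst card_Un_disjoint[symmetric]) (auto simp: R_def intro: arg_cong[where f = card])
  ultimately show ?thesis by simp
qed

text \<open>A self-map g of order dividing 3 has as many points as fixed points, modulo 3:
  the remaining points fall into orbits of size 3.\<close>
lemma card_mod3_fixed_points:
  assumes "finite S" "\<forall>x\<in>S. g x \<in> S" "\<forall>x\<in>S. g (g (g x)) = x"
  shows "card S mod 3 = card {x\<in>S. g x = x} mod 3"
  using assms
proof (induction "card S" arbitrary: S rule: less_induct)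
  case less
  show ?case
  proof (cases "\<exists>x\<in>S. g x \<noteq> x")
    case False
    then have "{x\<in>S. g x = x} = S" by auto
    then show ?thesis by simp
  next
    case True
    then obtain x where x: "x \<in> S" "g x \<noteq> x" by auto
    define Orb where "Orb = {x, g x, g (g x)}"
    have g3: "g (g (g x)) = x" using less.prems x by auto
    have distinct: "g (g x) \<noteq> x" "g (g x) \<noteq> g x" using g3 x(2) by metis+
    have "card Orb = 3" using x(2) distinct by (auto simp: Orb_def card_insert_if)
    moreover have "Orb \<subseteq> S" using less.prems x by (auto simp: Orb_def)
    ultimately have card_S: "card S = card (S - Orb) + 3"
      using less.prems(1) by (metis card_Diff_subset card_mono finite_subset le_add_diff_inverse2)
    have "g y \<notin> Orb" if "y \<in> S" "y \<notin> Orb" for y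
      using that less.prems(3) g3 by (auto simp: Orb_def)
    then have closed: "\<forall>y\<in>S - Orb. g y \<in> S - Orb" using less.prems(2) by blast
    have "{y\<in>S - Orb. g y = y} = {y\<in>S. g y = y}"
      using x(2) distinct g3 by (auto simp: Orb_def)
    moreover have "card (S - Orb) mod 3 = card {y\<in>S - Orb. g y = y} mod 3"
      by (rule less.hyps) (use card_S less.prems closed in auto)
    ultimately show ?thesis using card_S by simp
  qed
qed

section \<open>Characteristic 3 and cube roots of unity, read off from q mod 3\<close>

lemma cube_eq_one_iff: "(x::'a::field)^3 = 1 \<longleftrightarrow> x = 1 \<or> x^2 + x + 1 = 0"
proof -
  have "x^3 - 1 = (x - 1) * (x^2 + x + 1)"
    by (simp add: algebra_simps power2_eq_square power3_eq_cube)
  then show ?thesis by (metis eq_iff_diff_eq_0 mult_eq_0_iff)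
qed

text \<open>In characteristic 3, translation by 1 has order 3 and no fixed point.\<close>
lemma card_mod3_of_char3:
  assumes "(3::'a::{finite,field}) = 0"
  shows "card (UNIV::'a set) mod 3 = 0"
proof -
  have "x + 1 + 1 + 1 = x + 3" for x :: 'a by (simp add: algebra_simps)
  then have "x + 1 + 1 + 1 = x" for x :: 'a using assms by simp
  then have "card (UNIV::'a set) mod 3 = card {x::'a. x + 1 = x} mod 3"
    using card_mod3_fixed_points[of "UNIV::'a set" "\<lambda>x. x + 1"] by simp
  then show ?thesis by simp
qed

text \<open>Otherwise (x, y) \<mapsto> (y, -x-y) on F_q^2 has order 3 with the single fixed point (0,0),
  so q^2 = 1 mod 3.\<close>
lemma card_mod3_of_not_char3:
  assumes h3: "(3::'a::{finite,field}) \<noteq> 0"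
  shows "card (UNIV::'a set) mod 3 \<noteq> 0"
proof
  assume q: "card (UNIV::'a set) mod 3 = 0"
  define g where "g = (\<lambda>p::'a \<times> 'a. (snd p, - fst p - snd p))"
  have "{p. g p = p} = {(0, 0)}"
  proof -
    have "p = (0, 0)" if "g p = p" for p
    proof -
      obtain x y where p: "p = (x, y)" by fastforce
      have "y = x" "- x - y = y" using that by (auto simp: g_def p)
      then have "3 * x = 0" by (simp add: algebra_simps)
      then show ?thesis using h3 p \<open>y = x\<close> by simp
    qed
    then show ?thesis by (auto simp: g_def)
  qed
  moreover have "card (UNIV::('a \<times> 'a) set) mod 3 = card {p. g p = p} mod 3"
    using card_mod3_fixed_points[of "UNIV::('a \<times> 'a) set" g] by (simp add: g_def)
  ultimately have "(card (UNIV::'a set) * card (UNIV::'a set)) mod 3 = 1"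
    by (simp flip: card_cartesian_product)
  with q show False by (metis dvd_eq_mod_eq_0 dvd_mult2 zero_neq_one)
qed

text \<open>A primitive cube root of unity w acts on F_q with the single fixed point 0.\<close>
lemma card_mod3_of_cube_root_of_unity:
  assumes h3: "(3::'a::{finite,field}) \<noteq> 0" and w: "(w::'a)^2 + w + 1 = 0"
  shows "card (UNIV::'a set) mod 3 = 1"
proof -
  have "w^3 = 1" using w cube_eq_one_iff by blast
  then have order3: "w * (w * (w * x)) = x" for x :: 'a
    by (simp add: power3_eq_cube mult.assoc[symmetric])
  have "w \<noteq> 1" using w h3 by auto
  then have "{x::'a. w * x = x} = {0}"
    by auto
  moreover have "card (UNIV::'a set) mod 3 = card {x::'a. w * x = x} mod 3"
    using card_mod3_fixed_points[of "UNIV::'a set" "(*) w"] order3 by simp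
  ultimately show ?thesis by simp
qed

text \<open>Conversely, if q = 1 mod 3 a primitive cube root of unity exists: otherwise the order-3
  map (x, y) \<mapsto> (y, 1/(xy)) on (F_q^*)^2 would have the single fixed point (1,1), forcing
  (q - 1)^2 = 1 mod 3.\<close>
lemma cube_root_of_unity_exists:
  assumes q: "card (UNIV::'a::{finite,field} set) mod 3 = 1"
  shows "\<exists>w::'a. w^2 + w + 1 = 0"
proof (rule ccontr)
  assume no_root: "\<nexists>w::'a. w^2 + w + 1 = 0"
  define S where "S = (UNIV - {0::'a}) \<times> (UNIV - {0::'a})"
  define g where "g = (\<lambda>p::'a \<times> 'a. (snd p, inverse (fst p * snd p)))"
  have "{p\<in>S. g p = p} = {(1, 1)}"
  proof -
    have "p = (1, 1)" if "p \<in> S" "g p = p" for p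
    proof -
      obtain x y where p: "p = (x, y)" by fastforce
      have xy: "x \<noteq> 0" "y = x" "inverse (x * y) = y" using that by (auto simp: g_def p S_def)
      then have "x^3 = 1" by (simp add: field_simps power3_eq_cube)
      then show ?thesis using no_root cube_eq_one_iff p xy by blast
    qed
    then show ?thesis by (auto simp: g_def S_def)
  qed
  moreover have "card S mod 3 = card {p\<in>S. g p = p} mod 3"
    by (rule card_mod3_fixed_points) (auto simp: S_def g_def field_simps)
  moreover have "card S = (card (UNIV::'a set) - 1) * (card (UNIV::'a set) - 1)"
    by (simp add: S_def card_cartesian_product card_Diff_singleton)
  moreover have "3 dvd (card (UNIV::'a set) - 1)"
    using q finite_UNIV_card_ge_0[where 'a='a] by presburger
  ultimately show False by auto
qed

section \<open>The rational function t and the curves L_a\<close>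

lemma smooth_numeral_ne_zero:
  "(2::'a::field) \<noteq> 0 \<Longrightarrow> (3::'a) \<noteq> 0 \<Longrightarrow> (2::'a)^i * 3^k \<noteq> 0"
  by simp

definition hessian_t :: "'a::field \<Rightarrow> 'a" where
  "hessian_t u = u * (u^3 + 216) / (u^3 - 27)"

lemma hessian_j_eq_cube: "hessian_j u = hessian_t u ^ 3"
  by (simp add: hessian_j_def hessian_t_def)

lemma hessian_t_rotate: "(m::'a::field)^3 = 1 \<Longrightarrow> hessian_t (m * u) = m * hessian_t u"
  by (simp add: hessian_t_def power_mult_distrib)

text \<open>The (symmetric) curves L_a(u, v) = 0, for a cube root of unity a, and the quadratic
  form Q that splits into L_w L_{w^2} when a primitive cube root of unity w exists.\<close>
definition hessian_L :: "'a::field \<Rightarrow> 'a \<Rightarrow> 'a \<Rightarrow> 'a" where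
  "hessian_L a u v = u * v - 3 * a * (u + v) - 18 * a^2"

definition hessian_Q :: "'a::field \<Rightarrow> 'a \<Rightarrow> 'a" where
  "hessian_Q u v = (u * v + 18)^2 + 3 * (u * v + 18) * (u + v - 6) + 9 * (u + v - 6)^2"

lemma hessian_t_eq_iff:
  fixes u v :: "'a::field"
  assumes "u^3 \<noteq> 27" "v^3 \<noteq> 27"
  shows "hessian_t v = hessian_t u \<longleftrightarrow> (v - u) * hessian_L 1 u v * hessian_Q u v = 0"
proof -
  have "v * (v^3 + 216) * (u^3 - 27) - u * (u^3 + 216) * (v^3 - 27)
      = (v - u) * hessian_L 1 u v * hessian_Q u v"
    by (simp add: hessian_L_def hessian_Q_def algebra_simps power2_eq_square power3_eq_cube)
  moreover have "hessian_t v = hessian_t u \<longleftrightarrow>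
      v * (v^3 + 216) * (u^3 - 27) = u * (u^3 + 216) * (v^3 - 27)"
    using assms by (simp add: hessian_t_def frac_eq_eq)
  ultimately show ?thesis by (metis eq_iff_diff_eq_0)
qed

text \<open>The curve L_a is the graph of the involution rho_a.\<close>
definition hessian_rho :: "'a::field \<Rightarrow> 'a \<Rightarrow> 'a" where
  "hessian_rho a u = 3 * a * (u + 6 * a) / (u - 3 * a)"

lemma hessian_rho_in_domain:
  fixes u a :: "'a::field"
  assumes h3: "(3::'a) \<noteq> 0" and a3: "a^3 = 1" and u: "u^3 \<noteq> 27"
  shows "u \<noteq> 3 * a" and "hessian_rho a u ^ 3 \<noteq> 27"
proof -
  have n27: "(27::'a) \<noteq> 0" using power_not_zero[OF h3, of 3] by simp
  have "u^3 - 27 = (u - 3 * a) * (u^2 + 3 * a * u + 9 * a^2)"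
    using a3 by (simp add: algebra_simps power2_eq_square power3_eq_cube)
  then have nz: "u - 3 * a \<noteq> 0" "u^2 + 3 * a * u + 9 * a^2 \<noteq> 0" using u by auto
  then show "u \<noteq> 3 * a" by simp
  have "(u + 6 * a)^3 - (u - 3 * a)^3 = 27 * a * (u^2 + 3 * a * u + 9 * a^2)"
    using a3 by (simp add: algebra_simps power2_eq_square power3_eq_cube)
  moreover have "a \<noteq> 0" using a3 by auto
  ultimately have "(u + 6 * a)^3 \<noteq> (u - 3 * a)^3" using nz n27 by auto
  moreover have "(3 * a * (u + 6 * a))^3 = 27 * (u + 6 * a)^3"
    using a3 by (simp add: power_mult_distrib)
  ultimately show "hessian_rho a u ^ 3 \<noteq> 27"
    using nz n27 by (simp add: hessian_rho_def field_simps)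
qed

lemma hessian_L_eq_zero_iff:
  fixes u a :: "'a::field"
  assumes "(3::'a) \<noteq> 0" and "a^3 = 1" and "u^3 \<noteq> 27"
  shows "hessian_L a u v = 0 \<longleftrightarrow> v = hessian_rho a u"
proof -
  have "u - 3 * a \<noteq> 0" using hessian_rho_in_domain(1)[OF assms] by simp
  moreover have "hessian_L a u v = v * (u - 3 * a) - 3 * a * (u + 6 * a)"
    by (simp add: hessian_L_def algebra_simps power2_eq_square)
  ultimately show ?thesis by (auto simp: hessian_rho_def field_simps)
qed

lemma hessian_L_diagonal: "hessian_L a (a * z) (a * z) = a^2 * (z^2 - 6 * z - 18)"
  by (simp add: hessian_L_def algebra_simps power2_eq_square)

lemma diagonal_root_cube_ne_27:
  fixes r :: "'a::field"
  assumes h3: "(3::'a) \<noteq> 0" and r: "r^2 - 6 * r - 18 = 0"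
  shows "r^3 \<noteq> 27"
proof
  assume "r^3 = 27"
  moreover have "r^3 - 27 = (r + 6) * (r^2 - 6 * r - 18) + 27 * (2 * r + 3)"
    by (simp add: algebra_simps power2_eq_square power3_eq_cube)
  moreover have n27: "(27::'a) \<noteq> 0" using power_not_zero[OF h3, of 3] by simp
  ultimately have "27 * (2 * r + 3) = 0" using r by simp
  then have "2 * r + 3 = 0" using n27 by (simp only: mult_eq_0_iff) simp
  moreover have "4 * (r^2 - 6 * r - 18) = (2 * r + 3)^2 - 18 * (2 * r + 3) - 27"
    by (simp add: algebra_simps power2_eq_square)
  ultimately show False using r n27 by simp
qed

lemma hessian_t_eq_12_iff:
  fixes u a :: "'a::field"
  assumes a3: "a^3 = 1" and u: "u^3 \<noteq> 27"
  shows "hessian_t u = 12 * a \<longleftrightarrow> hessian_L a u u = 0"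
proof -
  have "u * (u^3 + 216 * a^3) - 12 * a * (u^3 - 27 * a^3) = (hessian_L a u u)^2"
    by (simp add: hessian_L_def algebra_simps power2_eq_square power3_eq_cube power4_eq_xxxx)
  then have id: "u * (u^3 + 216) - 12 * a * (u^3 - 27) = (hessian_L a u u)^2" using a3 by simp
  have "u^3 - 27 \<noteq> 0" using u by simp
  then have "hessian_t u = 12 * a \<longleftrightarrow> u * (u^3 + 216) - 12 * a * (u^3 - 27) = 0"
    by (simp add: hessian_t_def field_simps)
  then show ?thesis unfolding id by simp
qed

text \<open>Two curves L_a, L_b through a common point (u, v) force the third one to contain (u, u);
  (a, b, c) runs over the orderings of the three cube roots of unity.\<close>
lemma hessian_L_third:
  fixes a b c u v :: "'a::field"
  assumes h3: "(3::'a) \<noteq> 0" and ab: "a \<noteq> b" and sum: "a + b + c = 0" and prod: "a * b = c^2"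
    and la: "hessian_L a u v = 0" and lb: "hessian_L b u v = 0"
  shows "hessian_L c u u = 0"
proof -
  have "hessian_L a u v - hessian_L b u v = - 3 * ((a - b) * (u + v + 6 * (a + b)))"
    by (simp add: hessian_L_def algebra_simps power2_eq_square)
  then have "u + v + 6 * (a + b) = 0" using la lb h3 ab by simp
  moreover have "a + b = - c" using sum by (simp add: eq_neg_iff_add_eq_0)
  ultimately have line: "u + v - 6 * c = 0" by simp
  have "hessian_L a u v = - hessian_L c u u + (u - 3 * a) * (u + v - 6 * c)
      - 18 * a * (a + b + c) + 18 * (a * b - c^2)"
    by (simp add: hessian_L_def algebra_simps power2_eq_square)
  then show ?thesis using la line sum prod by simp
qed

section \<open>Fibres of j as orbits under cube roots of unity\<close>

definition cube_rotations :: "'a::field set \<Rightarrow> 'a set" where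
  "cube_rotations X = {m * x |m x. m^3 = 1 \<and> x \<in> X}"

lemma cubes_eq_cube_rotations: "{u::'a::field. u^3 = c^3} = cube_rotations {c}"
proof (intro set_eqI iffI)
  fix u :: 'a assume "u \<in> {u. u^3 = c^3}"
  then have u: "u^3 = c^3" by simp
  show "u \<in> cube_rotations {c}"
  proof (cases "c = 0")
    case True
    then have "u = 1 * c" "(1::'a)^3 = 1" using u by simp_all
    then show ?thesis unfolding cube_rotations_def by blast
  next
    case False
    then have "u = (u / c) * c" "(u / c)^3 = 1" using u by (simp_all add: power_divide)
    then show ?thesis unfolding cube_rotations_def by blast
  qed
qed (auto simp: cube_rotations_def power_mult_distrib)

lemma hessian_j_fibre:
  fixes u :: "'a::field"
  shows "{v. v^3 \<noteq> 27 \<and> hessian_j v = hessian_j u}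
       = cube_rotations {v. v^3 \<noteq> 27 \<and> hessian_t v = hessian_t u}"
proof (intro set_eqI iffI)
  fix v assume "v \<in> {v. v^3 \<noteq> 27 \<and> hessian_j v = hessian_j u}"
  then have v: "v^3 \<noteq> 27" "hessian_t v ^ 3 = hessian_t u ^ 3" by (auto simp: hessian_j_eq_cube)
  then obtain m where m: "m^3 = 1" "hessian_t v = m * hessian_t u"
    using cubes_eq_cube_rotations[of "hessian_t u"] by (auto simp: cube_rotations_def)
  then have "m \<noteq> 0" by auto
  define x where "x = v / m"
  have v_eq: "v = m * x" using \<open>m \<noteq> 0\<close> by (simp add: x_def)
  then have "x^3 = v^3" using m(1) by (simp add: power_mult_distrib)
  moreover have "hessian_t x = hessian_t u"
    using m \<open>m \<noteq> 0\<close> hessian_t_rotate[OF m(1), of x] by (simp add: v_eq)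
  ultimately have "x \<in> {v. v^3 \<noteq> 27 \<and> hessian_t v = hessian_t u}" using v(1) by simp
  then show "v \<in> cube_rotations {v. v^3 \<noteq> 27 \<and> hessian_t v = hessian_t u}"
    using m(1) v_eq unfolding cube_rotations_def by blast
next
  fix v assume "v \<in> cube_rotations {v. v^3 \<noteq> 27 \<and> hessian_t v = hessian_t u}"
  then obtain m x where "m^3 = 1" "x^3 \<noteq> 27" "hessian_t x = hessian_t u" "v = m * x"
    by (auto simp: cube_rotations_def)
  then show "v \<in> {v. v^3 \<noteq> 27 \<and> hessian_j v = hessian_j u}"
    by (simp add: hessian_t_rotate hessian_j_eq_cube power_mult_distrib)
qed

lemma hessian_j_eq_0_set:
  assumes h3: "(3::'a::field) \<noteq> 0"
  shows "{u::'a. u^3 \<noteq> 27 \<and> hessian_j u = 0} = insert 0 (cube_rotations {-6})"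
proof -
  have n27: "(27::'a) \<noteq> 0" using power_not_zero[OF h3, of 3] by simp
  have "(-216::'a) \<noteq> 27"
  proof
    assume "(-216::'a) = 27"
    then have "(243::'a) = 0" by (simp add: algebra_simps)
    then show False using power_not_zero[OF h3, of 5] by simp
  qed
  have j0: "hessian_j u = 0 \<longleftrightarrow> u = 0 \<or> u^3 = -216" if "u^3 \<noteq> 27" for u :: 'a
    using that by (simp add: hessian_j_eq_cube hessian_t_def eq_neg_iff_add_eq_0)
  have "u^3 \<noteq> 27 \<and> hessian_j u = 0 \<longleftrightarrow> u = 0 \<or> u^3 = (-6)^3" for u :: 'a
    using j0[of u] n27 \<open>(-216::'a) \<noteq> 27\<close> by (cases "u^3 = 27") auto
  then have "{u::'a. u^3 \<noteq> 27 \<and> hessian_j u = 0} = insert 0 {u. u^3 = (-6)^3}" by auto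
  then show ?thesis by (simp only: cubes_eq_cube_rotations)
qed

lemma hessian_j_eq_1728_set:
  assumes h3: "(3::'a::field) \<noteq> 0"
  shows "{u::'a. u^3 \<noteq> 27 \<and> hessian_j u = 1728} = cube_rotations {z. z^2 - 6 * z - 18 = 0}"
proof (intro set_eqI iffI)
  fix u :: 'a assume "u \<in> {u. u^3 \<noteq> 27 \<and> hessian_j u = 1728}"
  then have u: "u^3 \<noteq> 27" "hessian_t u ^ 3 = 12^3" by (auto simp: hessian_j_eq_cube)
  then obtain a where a: "a^3 = 1" "hessian_t u = a * 12"
    using cubes_eq_cube_rotations[of 12] by (auto simp: cube_rotations_def)
  then have "a \<noteq> 0" by auto
  have "hessian_L a u u = 0" using a hessian_t_eq_12_iff[OF a(1) u(1)] by (simp add: mult.commute)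
  then have "a^2 * ((u / a)^2 - 6 * (u / a) - 18) = 0"
    using hessian_L_diagonal[of a "u / a"] \<open>a \<noteq> 0\<close> by simp
  then have "u / a \<in> {z. z^2 - 6 * z - 18 = 0}" using \<open>a \<noteq> 0\<close> by simp
  moreover have "u = a * (u / a)" using \<open>a \<noteq> 0\<close> by simp
  ultimately show "u \<in> cube_rotations {z. z^2 - 6 * z - 18 = 0}"
    using a(1) unfolding cube_rotations_def by blast
next
  fix u :: 'a assume "u \<in> cube_rotations {z. z^2 - 6 * z - 18 = 0}"
  then obtain a z where az: "a^3 = 1" "z^2 - 6 * z - 18 = 0" "u = a * z"
    by (auto simp: cube_rotations_def)
  have "u^3 \<noteq> 27"
    using diagonal_root_cube_ne_27[OF h3 az(2)] az by (simp add: power_mult_distrib)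
  moreover have "hessian_t u = 12 * a"
    using hessian_t_eq_12_iff[OF az(1) \<open>u^3 \<noteq> 27\<close>] hessian_L_diagonal[of a z] az by simp
  ultimately show "u \<in> {u. u^3 \<noteq> 27 \<and> hessian_j u = 1728}"
    using az(1) by (simp add: hessian_j_eq_cube power_mult_distrib)
qed

section \<open>Characteristic 3\<close>

text \<open>Here 27 = 216 = 0, so j(u) = u^3 on D = F_q - {0}, and cubing is injective
  because (x - y)^3 = x^3 - y^3.\<close>
lemma card_hessian_j_char3:
  assumes h3: "(3::'a::{finite,field}) = 0"
  shows "card (hessian_j ` {u::'a. u^3 \<noteq> 27}) = card (UNIV::'a set) - 1"
proof -
  have "(27::'a) = 3 * 9" "(216::'a) = 3 * 72" by simp_all
  then have z27: "(27::'a) = 0" and z216: "(216::'a) = 0" using h3 by simp_all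
  have D: "{u::'a. u^3 \<noteq> 27} = UNIV - {0}" using z27 by auto
  have j: "hessian_j u = u^3" if "u \<noteq> 0" for u :: 'a
    using that z27 z216 by (simp add: hessian_j_def power3_eq_cube)
  have "inj_on (\<lambda>x::'a. x^3) (UNIV - {0})"
  proof (rule inj_onI)
    fix x y :: 'a assume "x^3 = y^3"
    moreover have "(x - y)^3 = x^3 - y^3 - 3 * x * y * (x - y)"
      by (simp add: algebra_simps power3_eq_cube)
    ultimately have "(x - y)^3 = 0" using h3 by simp
    then show "x = y" by simp
  qed
  then have "card ((\<lambda>x::'a. x^3) ` (UNIV - {0})) = card (UNIV - {0::'a})" by (rule card_image)
  moreover have "hessian_j ` (UNIV - {0}) = (\<lambda>x::'a. x^3) ` (UNIV - {0})"
    using j by (auto simp: image_iff)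
  ultimately show ?thesis unfolding D by (simp add: card_Diff_singleton)
qed

section \<open>No primitive cube root of unity (q = 2 mod 3)\<close>

lemma cube_injective_no_cube_root:
  fixes x y :: "'a::field"
  assumes no_root: "\<nexists>w::'a. w^2 + w + 1 = 0" and "x^3 = y^3"
  shows "x = y"
proof -
  obtain m where "m^3 = 1" "x = m * y"
    using assms(2) cubes_eq_cube_rotations[of y] by (auto simp: cube_rotations_def)
  then show ?thesis using no_root cube_eq_one_iff by auto
qed

lemma hessian_Q_eq_zero_no_cube_root:
  fixes u v :: "'a::field"
  assumes h3: "(3::'a) \<noteq> 0" and no_root: "\<nexists>w::'a. w^2 + w + 1 = 0"
  shows "hessian_Q u v = 0 \<longleftrightarrow> u + v = 6 \<and> u * v = -18"
proof -
  define A B where "A = u * v + 18" and "B = u + v - 6"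
  have Q: "hessian_Q u v = A^2 + 3 * A * B + 9 * B^2" by (simp add: hessian_Q_def A_def B_def)
  have "B = 0" if "hessian_Q u v = 0"
  proof (rule ccontr)
    assume "B \<noteq> 0"
    define x where "x = A / (3 * B)"
    have "A = 3 * B * x" using \<open>B \<noteq> 0\<close> h3 by (simp add: x_def)
    then have "9 * B^2 * (x^2 + x + 1) = hessian_Q u v"
      by (simp add: Q algebra_simps power2_eq_square)
    moreover have "9 * B^2 \<noteq> 0" using \<open>B \<noteq> 0\<close> power_not_zero[OF h3, of 2] by simp
    ultimately show False using that no_root by simp
  qed
  then have "hessian_Q u v = 0 \<longleftrightarrow> A = 0 \<and> B = 0" by (auto simp: Q)
  moreover have "A = 0 \<longleftrightarrow> u * v = -18" by (simp add: A_def eq_neg_iff_add_eq_0)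
  moreover have "B = 0 \<longleftrightarrow> u + v = 6" by (simp add: B_def)
  ultimately show ?thesis by blast
qed

lemma hessian_t_fibre_no_cube_root:
  fixes u :: "'a::field"
  assumes h3: "(3::'a) \<noteq> 0" and no_root: "\<nexists>w::'a. w^2 + w + 1 = 0" and u: "u^3 \<noteq> 27"
  shows "{v. v^3 \<noteq> 27 \<and> hessian_t v = hessian_t u}
       = (if hessian_L 1 u u = 0 then {u, 6 - u} else {u, hessian_rho 1 u})"
proof -
  have one: "(1::'a)^3 = 1" by simp
  have diagonal: "hessian_L 1 u u = u^2 - 6 * u - 18" "hessian_L 1 u u = (6 - u)^2 - 6 * (6 - u) - 18"
    by (simp_all add: hessian_L_def algebra_simps power2_eq_square)
  have Q: "hessian_Q u v = 0 \<longleftrightarrow> v = 6 - u \<and> hessian_L 1 u u = 0" for v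
  proof -
    have shifted: "u * (6 - u) + 18 = - hessian_L 1 u u"
      unfolding diagonal(1) by (simp add: algebra_simps power2_eq_square)
    have "u * (6 - u) = -18 \<longleftrightarrow> u * (6 - u) + 18 = 0" by (rule eq_neg_iff_add_eq_0)
    also have "\<dots> \<longleftrightarrow> hessian_L 1 u u = 0" unfolding shifted by simp
    finally have on_diagonal: "u * (6 - u) = -18 \<longleftrightarrow> hessian_L 1 u u = 0" .
    have "u + v = 6 \<longleftrightarrow> v = 6 - u" by (auto simp: algebra_simps)
    then show ?thesis
      unfolding hessian_Q_eq_zero_no_cube_root[OF h3 no_root] using on_diagonal by auto
  qed
  have fibre: "v^3 \<noteq> 27 \<and> hessian_t v = hessian_t u \<longleftrightarrow>
      v = u \<or> v = hessian_rho 1 u \<or> (v = 6 - u \<and> hessian_L 1 u u = 0)" (is "_ \<longleftrightarrow> ?R") for v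
  proof
    assume "v^3 \<noteq> 27 \<and> hessian_t v = hessian_t u"
    then have "(v - u) * hessian_L 1 u v * hessian_Q u v = 0" using hessian_t_eq_iff[OF u] by blast
    then have "v - u = 0 \<or> hessian_L 1 u v = 0 \<or> hessian_Q u v = 0" by simp
    then show ?R unfolding hessian_L_eq_zero_iff[OF h3 one u, of v] Q by simp
  next
    assume v: ?R
    then have "v^3 \<noteq> 27"
    proof (elim disjE conjE)
      assume "v = 6 - u" "hessian_L 1 u u = 0"
      then show ?thesis using diagonal_root_cube_ne_27[OF h3, of "6 - u"] diagonal(2) by simp
    qed (use u hessian_rho_in_domain(2)[OF h3 one u] in simp_all)
    moreover have "v - u = 0 \<or> hessian_L 1 u v = 0 \<or> hessian_Q u v = 0"
      unfolding hessian_L_eq_zero_iff[OF h3 one u, of v] Q using v by auto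
    ultimately show "v^3 \<noteq> 27 \<and> hessian_t v = hessian_t u"
      using hessian_t_eq_iff[OF u] by simp
  qed
  show ?thesis
  proof (cases "hessian_L 1 u u = 0")
    case True
    then have "hessian_rho 1 u = u" using hessian_L_eq_zero_iff[OF h3 one u] by simp
    then show ?thesis using True by (intro set_eqI) (simp only: mem_Collect_eq fibre, auto)
  next
    case False
    then show ?thesis by (intro set_eqI) (simp only: mem_Collect_eq fibre, auto)
  qed
qed

lemma card_hessian_t_fibre_no_cube_root:
  fixes u :: "'a::field"
  assumes h3: "(3::'a) \<noteq> 0" and no_root: "\<nexists>w::'a. w^2 + w + 1 = 0" and u: "u^3 \<noteq> 27"
  shows "card {v. v^3 \<noteq> 27 \<and> hessian_t v = hessian_t u} = (if (2::'a) = 0 \<and> u = 0 then 1 else 2)"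
proof -
  have one: "(1::'a)^3 = 1" by simp
  have "u \<noteq> 3" using hessian_rho_in_domain(1)[OF h3 one u] by simp
  have "(6::'a) = 2 * 3" "(18::'a) = 2 * 9" by simp_all
  then have char2: "(6::'a) = 0" "(18::'a) = 0" if "(2::'a) = 0" using that by simp_all
  have diagonal: "hessian_L 1 u u = u^2 - 6 * u - 18"
    by (simp add: hessian_L_def algebra_simps power2_eq_square)
  show ?thesis
  proof (cases "hessian_L 1 u u = 0")
    case True
    have "6 - u = u \<longleftrightarrow> 2 * (u - 3) = 0" by (auto simp: algebra_simps)
    then have "6 - u = u \<longleftrightarrow> (2::'a) = 0"
      using \<open>u \<noteq> 3\<close> by (simp only: mult_eq_0_iff right_minus_eq) simp
    moreover have "u = 0" if "(2::'a) = 0" using True diagonal char2[OF that] by simp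
    ultimately show ?thesis using True by (auto simp: hessian_t_fibre_no_cube_root[OF assms])
  next
    case False
    then have "hessian_rho 1 u \<noteq> u" using hessian_L_eq_zero_iff[OF h3 one u] by simp
    moreover have "\<not> ((2::'a) = 0 \<and> u = 0)" using False diagonal char2 by auto
    ultimately show ?thesis using False by (auto simp: hessian_t_fibre_no_cube_root[OF assms])
  qed
qed

text \<open>Since j = t^3 with cubing injective, J_H counts the t-fibres: (q - 1)/2 pairs for odd q,
  and (q - 2)/2 pairs plus the singleton {0} for even q.\<close>
lemma card_hessian_j_no_cube_root:
  assumes h3: "(3::'a::{finite,field}) \<noteq> 0" and no_root: "\<nexists>w::'a. w^2 + w + 1 = 0"
  shows "card (hessian_j ` {u::'a. u^3 \<noteq> 27}) = card (UNIV::'a set) div 2"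
proof -
  define D where "D = {u::'a. u^3 \<noteq> 27}"
  have "u^3 = 27 \<longleftrightarrow> u = 3" for u :: 'a
    using cube_injective_no_cube_root[OF no_root, of u 3] by auto
  then have "D = UNIV - {3}" by (auto simp: D_def)
  then have card_D: "card D = card (UNIV::'a set) - 1" by (simp add: card_Diff_singleton)
  have "hessian_j ` D = (\<lambda>x. x^3) ` hessian_t ` D" by (auto simp: hessian_j_eq_cube image_image)
  moreover have "inj_on (\<lambda>x::'a. x^3) (hessian_t ` D)"
    by (auto intro: inj_onI cube_injective_no_cube_root[OF no_root])
  ultimately have "card (hessian_j ` D) = card (hessian_t ` D)" by (simp add: card_image)
  moreover have fibre: "card {v\<in>D. hessian_t v = hessian_t u} = (if (2::'a) = 0 \<and> u = 0 then 1 else 2)"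
    if "u \<in> D" for u
    using card_hessian_t_fibre_no_cube_root[OF h3 no_root, of u] that by (simp add: D_def)
  moreover have "card (hessian_t ` D) = card (UNIV::'a set) div 2"
  proof (cases "(2::'a) = 0")
    case False
    then have "card D = 2 * card (hessian_t ` D)" by (intro card_constant_fibres) (auto simp: fibre)
    then show ?thesis using card_D by linarith
  next
    case True
    have "(27::'a) \<noteq> 0" using power_not_zero[OF h3, of 3] by simp
    then have "0 \<in> D" by (simp add: D_def)
    moreover have "{v\<in>D. hessian_t v = hessian_t 0} = {0}"
    proof -
      have "card {v\<in>D. hessian_t v = hessian_t 0} = 1" using fibre[OF \<open>0 \<in> D\<close>] True by simp
      then obtain x where "{v\<in>D. hessian_t v = hessian_t 0} = {x}" by (rule card_1_singletonE)
      then show ?thesis using \<open>0 \<in> D\<close> by auto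
    qed
    ultimately have "card D + 1 = 2 * card (hessian_t ` D)"
      using fibre True by (intro card_fibres_two_except_one) auto
    then show ?thesis using card_D by linarith
  qed
  ultimately show ?thesis by (simp add: D_def)
qed

section \<open>A primitive cube root of unity (q = 1 mod 3)\<close>

lemma card_cube_rotations:
  fixes X :: "'a::field set"
  assumes separated: "\<And>m x. m^3 = 1 \<Longrightarrow> x \<in> X \<Longrightarrow> m * x \<in> X \<Longrightarrow> m = 1"
  shows "card (cube_rotations X) = card {m::'a. m^3 = 1} * card X"
proof -
  have eq: "cube_rotations X = (\<lambda>(m, x). m * x) ` ({m. m^3 = 1} \<times> X)"
    by (auto simp: cube_rotations_def)
  have "inj_on (\<lambda>(m, x). m * x) ({m::'a. m^3 = 1} \<times> X)"
  proof (rule inj_onI, clarsimp)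
    fix m x m' x' :: 'a
    assume m: "m^3 = 1" "m'^3 = 1" and x: "x \<in> X" "x' \<in> X" and eq: "m * x = m' * x'"
    then have "m' \<noteq> 0" by auto
    then have "(m / m')^3 = 1" "(m / m') * x \<in> X" using m eq x by (simp_all add: field_simps)
    then have "m / m' = 1" using separated x(1) by blast
    then show "m = m' \<and> x = x'" using eq \<open>m' \<noteq> 0\<close> by simp
  qed
  then show ?thesis by (simp add: eq card_image card_cartesian_product)
qed

context
  fixes w :: "'a::field"
  assumes three_ne_zero: "(3::'a) \<noteq> 0" and w_root: "w^2 + w + 1 = 0"
begin

lemma cube_root_facts: "w^3 = 1" "w \<noteq> 1" "w^2 \<noteq> 1" "w^2 \<noteq> w" "(w^2)^3 = 1" "w^4 = w"
proof -
  show w3: "w^3 = 1" using w_root cube_eq_one_iff by blast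
  show "w \<noteq> 1" using w_root three_ne_zero by auto
  then show "w^2 \<noteq> w" using w3 by (auto simp: power2_eq_square power3_eq_cube)
  show "w^2 \<noteq> 1"
  proof
    assume "w^2 = 1"
    then have "w = -2" using w_root by (simp add: eq_neg_iff_add_eq_0 add.commute)
    then have "(3::'a) + 1 = 1" using \<open>w^2 = 1\<close> by (simp add: power2_eq_square)
    then have "(3::'a) = 0" by (simp only: add_cancel_left_left)
    then show False using three_ne_zero by simp
  qed
  show "(w^2)^3 = 1" using w3 by (metis power_mult_distrib power_one power2_eq_square)
  show "w^4 = w" using w3 by (simp add: power_numeral_reduce power3_eq_cube)
qed

lemma cube_roots_of_unity: "{m::'a. m^3 = 1} = {1, w, w^2}"
proof -
  have factor: "m^2 + m + 1 = (m - w) * (m - w^2)" for m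
  proof -
    have "(m - w) * (m - w^2) = m^2 + m + 1 - m * (w^2 + w + 1) + (w^3 - 1)"
      by (simp add: algebra_simps power2_eq_square power3_eq_cube)
    then show ?thesis unfolding w_root cube_root_facts(1) by simp
  qed
  show ?thesis
  proof (intro set_eqI iffI)
    fix m assume "m \<in> {m::'a. m^3 = 1}"
    then show "m \<in> {1, w, w^2}" by (auto simp: cube_eq_one_iff factor)
  qed (use cube_root_facts(1,5) in auto)
qed

lemma card_cube_roots_of_unity: "card {m::'a. m^3 = 1} = 3"
  using cube_root_facts by (simp add: cube_roots_of_unity)

lemma hessian_Q_split: "hessian_Q u v = hessian_L w u v * hessian_L (w^2) u v"
proof -
  define A B where "A = u * v + 18" and "B = u + v - 6"
  have "hessian_L w u v - (A - 3 * w * B) = -18 * (w^2 + w + 1)"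
    by (simp add: hessian_L_def A_def B_def algebra_simps power2_eq_square)
  moreover have "hessian_L (w^2) u v - (A - 3 * w^2 * B) = -18 * (w^2 - w + 1) * (w^2 + w + 1)"
    by (simp add: hessian_L_def A_def B_def algebra_simps power2_eq_square)
  moreover have "(A - 3 * w * B) * (A - 3 * w^2 * B) - hessian_Q u v
      = (9 * (w - 1) * B^2 - 3 * A * B) * (w^2 + w + 1)"
    by (simp add: hessian_Q_def A_def B_def algebra_simps power2_eq_square)
  ultimately show ?thesis using w_root by simp
qed

lemma hessian_t_fibre:
  assumes u: "u^3 \<noteq> (27::'a)"
  shows "{v. v^3 \<noteq> 27 \<and> hessian_t v = hessian_t u}
       = {u, hessian_rho 1 u, hessian_rho w u, hessian_rho (w^2) u}"
proof -
  have roots: "a^3 = 1" if "a \<in> {1, w, w^2}" for a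
    using that cube_roots_of_unity by auto
  have "v^3 \<noteq> 27 \<and> hessian_t v = hessian_t u \<longleftrightarrow>
      v = u \<or> (\<exists>a\<in>{1, w, w^2}. hessian_L a u v = 0)" if "v^3 \<noteq> 27" for v
    using that hessian_t_eq_iff[OF u that] by (auto simp: hessian_Q_split)
  moreover have "hessian_L a u v = 0 \<longleftrightarrow> v = hessian_rho a u" if "a \<in> {1, w, w^2}" for a v
    using hessian_L_eq_zero_iff[OF three_ne_zero roots[OF that] u] .
  moreover have "hessian_rho a u ^ 3 \<noteq> 27" if "a \<in> {1, w, w^2}" for a
    using hessian_rho_in_domain(2)[OF three_ne_zero roots[OF that] u] .
  ultimately show ?thesis using u by auto
qed

lemma card_hessian_t_fibre:
  assumes u: "u^3 \<noteq> (27::'a)" and off_diagonal: "\<And>a. a^3 = 1 \<Longrightarrow> hessian_L a u u \<noteq> 0"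
  shows "card {v. v^3 \<noteq> 27 \<and> hessian_t v = hessian_t u} = 4"
proof -
  note w = cube_root_facts
  have self: "hessian_rho a u \<noteq> u" if "a^3 = 1" for a
    using hessian_L_eq_zero_iff[OF three_ne_zero that u, of u] off_diagonal[OF that] by auto
  have distinct: "hessian_rho a u \<noteq> hessian_rho b u"
    if "a^3 = 1" "b^3 = 1" "c^3 = 1" "a \<noteq> b" "a + b + c = 0" "a * b = c^2" for a b c
  proof
    assume "hessian_rho a u = hessian_rho b u"
    then have "hessian_L a u (hessian_rho a u) = 0" "hessian_L b u (hessian_rho a u) = 0"
      using hessian_L_eq_zero_iff[OF three_ne_zero _ u] that(1,2) by auto
    then have "hessian_L c u u = 0" using hessian_L_third[OF three_ne_zero that(4-6)] by blast
    then show False using off_diagonal[OF that(3)] by simp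
  qed
  have sums: "1 + w + w^2 = 0" "1 + w^2 + w = 0" "w + w^2 + 1 = 0"
    using w_root by (simp_all add: algebra_simps)
  have "hessian_rho 1 u \<noteq> hessian_rho w u"
    using distinct[of 1 w "w^2"] w sums(1) by (simp add: power_mult[symmetric])
  moreover have "hessian_rho 1 u \<noteq> hessian_rho (w^2) u"
    using distinct[of 1 "w^2" w] w sums(2) by simp
  moreover have "hessian_rho w u \<noteq> hessian_rho (w^2) u"
    using distinct[of w "w^2" 1] w sums(3) by (simp add: power2_eq_square power3_eq_cube mult.assoc)
  moreover have "u \<noteq> hessian_rho 1 u" "u \<noteq> hessian_rho w u" "u \<noteq> hessian_rho (w^2) u"
    using self[of 1] self[OF w(1)] self[OF w(5)] by auto
  ultimately show ?thesis by (simp add: hessian_t_fibre[OF u])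
qed

lemma card_generic_hessian_j_fibre:
  assumes u: "u^3 \<noteq> (27::'a)" and "hessian_j u \<noteq> 0" and "hessian_j u \<noteq> 1728"
  shows "card {v. v^3 \<noteq> 27 \<and> hessian_j v = hessian_j u} = 12"
proof -
  define T where "T = {v. v^3 \<noteq> 27 \<and> hessian_t v = hessian_t u}"
  have "hessian_t u \<noteq> 0" using assms(2) by (simp add: hessian_j_eq_cube)
  have "hessian_L a u u \<noteq> 0" if "a^3 = 1" for a
    using hessian_t_eq_12_iff[OF that u] assms(3) that by (auto simp: hessian_j_eq_cube power_mult_distrib)
  then have "card T = 4" unfolding T_def by (rule card_hessian_t_fibre[OF u])
  moreover have "m = 1" if "m^3 = 1" "x \<in> T" "m * x \<in> T" for m x
  proof -
    have "m * hessian_t u = hessian_t u" using that hessian_t_rotate[of m x] by (simp add: T_def)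
    then show ?thesis using \<open>hessian_t u \<noteq> 0\<close> by simp
  qed
  ultimately have "card (cube_rotations T) = 12"
    using card_cube_rotations[of T] card_cube_roots_of_unity by simp
  then show ?thesis by (simp add: hessian_j_fibre T_def)
qed

lemma card_hessian_j_eq_0_set:
  "card {u::'a. u^3 \<noteq> 27 \<and> hessian_j u = 0} = (if (2::'a) = 0 then 1 else 4)"
proof (cases "(2::'a) = 0")
  case True
  moreover have "(-6::'a) = - (2 * 3)" by simp
  ultimately have "(-6::'a) = 0" by simp
  then have "cube_rotations {-6::'a} = {0}" by (auto simp: cube_rotations_def intro: exI[of _ 1])
  then show ?thesis using True by (simp add: hessian_j_eq_0_set[OF three_ne_zero])
next
  case False
  then have "(-6::'a) \<noteq> 0"
    using smooth_numeral_ne_zero[OF False three_ne_zero, of 1 1] by simp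
  then have "card (cube_rotations {-6::'a}) = 3"
    using card_cube_rotations[of "{-6::'a}"] card_cube_roots_of_unity by simp
  moreover have "0 \<notin> cube_rotations {-6::'a}"
    using \<open>(-6::'a) \<noteq> 0\<close> by (auto simp: cube_rotations_def)
  moreover have "finite (cube_rotations {-6::'a})"
    using \<open>card (cube_rotations {-6::'a}) = 3\<close> card.infinite by fastforce
  ultimately show ?thesis using False
    by (simp add: hessian_j_eq_0_set[OF three_ne_zero] card_insert_if)
qed

text \<open>The fibre over j = 1728 is empty or consists of the rotations of the two distinct roots
  r, 6 - r of z^2 - 6z - 18, whose cubes differ.\<close>
lemma card_hessian_j_eq_1728_set:
  assumes two: "(2::'a) \<noteq> 0"
  shows "card {u::'a. u^3 \<noteq> 27 \<and> hessian_j u = 1728} \<in> {0, 6}"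
proof (cases "\<exists>r::'a. r^2 - 6 * r - 18 = 0")
  case False
  then show ?thesis by (simp add: hessian_j_eq_1728_set[OF three_ne_zero] cube_rotations_def)
next
  case True
  then obtain r :: 'a where r: "r^2 - 6 * r - 18 = 0" by blast
  have "r \<noteq> 3" using diagonal_root_cube_ne_27[OF three_ne_zero r] by auto
  have n18: "(18::'a) \<noteq> 0" and n108: "(108::'a) \<noteq> 0"
    using smooth_numeral_ne_zero[OF two three_ne_zero, of 1 2]
      smooth_numeral_ne_zero[OF two three_ne_zero, of 2 3] by simp_all
  have roots: "{z::'a. z^2 - 6 * z - 18 = 0} = {r, 6 - r}"
  proof -
    have "z^2 - 6 * z - 18 = (z - r) * (z - (6 - r)) + (r^2 - 6 * r - 18)" for z :: 'a
      by (simp add: algebra_simps power2_eq_square)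
    then show ?thesis using r by auto
  qed
  have "r \<noteq> 6 - r"
  proof
    assume "r = 6 - r"
    then have "2 * (r - 3) = 0" by (simp add: algebra_simps)
    then show False using two \<open>r \<noteq> 3\<close> by (simp only: mult_eq_0_iff right_minus_eq) simp
  qed
  have distinct_cubes: "r^3 \<noteq> (6 - r)^3"
  proof
    assume "r^3 = (6 - r)^3"
    moreover have "r^3 - (6 - r)^3 = 108 * (r - 3) + (2 * r - 6) * (r^2 - 6 * r - 18)"
      by (simp add: algebra_simps power2_eq_square power3_eq_cube)
    ultimately have "108 * (r - 3) = 0" using r by simp
    then show False using n108 \<open>r \<noteq> 3\<close> by (simp only: mult_eq_0_iff right_minus_eq) simp
  qed
  have nonzero: "x \<noteq> 0" if "x \<in> {r, 6 - r}" for x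
    using that n18 unfolding roots[symmetric] by auto
  have "m = 1" if "m^3 = 1" "x \<in> {r, 6 - r}" "m * x \<in> {r, 6 - r}" for m x
  proof -
    have "(m * x)^3 = x^3" using that(1) by (simp add: power_mult_distrib)
    then have "m * x = x" using that(2,3) distinct_cubes by auto
    then show "m = 1" using nonzero[OF that(2)] by simp
  qed
  then have "card (cube_rotations {r, 6 - r}) = 6"
    using card_cube_rotations[of "{r, 6 - r}"] card_cube_roots_of_unity \<open>r \<noteq> 6 - r\<close> by simp
  then show ?thesis unfolding hessian_j_eq_1728_set[OF three_ne_zero] roots by simp
qed

end

lemma card_hessian_domain_cube_root:
  assumes h3: "(3::'a::{finite,field}) \<noteq> 0" and w: "(w::'a)^2 + w + 1 = 0"
  shows "card {u::'a. u^3 \<noteq> 27} + 3 = card (UNIV::'a set)"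
proof -
  have "{u::'a. u^3 = 27} = cube_rotations {3}"
    using cubes_eq_cube_rotations[of "3::'a"] by simp
  moreover have "card (cube_rotations {3::'a}) = 3"
    using card_cube_rotations[of "{3::'a}"] card_cube_roots_of_unity[OF h3 w] h3 by simp
  moreover have "card {u::'a. u^3 \<noteq> 27} + card {u::'a. u^3 = 27} = card (UNIV::'a set)"
    by (subst card_Un_disjoint[symmetric]) (auto intro: arg_cong[where f = card])
  ultimately show ?thesis by simp
qed

text \<open>Splitting off the values 0 and 1728: the remaining j-fibres have 12 points, the fibre
  over 0 has 4 points (1 in characteristic 2) and the fibre over 1728 has 0 or 6 points.\<close>
lemma card_hessian_j_cube_root:
  assumes h3: "(3::'a::{finite,field}) \<noteq> 0" and w: "(w::'a)^2 + w + 1 = 0"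
  shows "card (hessian_j ` {u::'a. u^3 \<noteq> 27}) = (card (UNIV::'a set) + 11) div 12"
proof -
  define D E where "D = {u::'a. u^3 \<noteq> 27}" and "E c = {u\<in>D. hessian_j u = c}" for c
  define B where "B = {0, 1728::'a}"
  have card_D: "card D + 3 = card (UNIV::'a set)"
    unfolding D_def by (rule card_hessian_domain_cube_root[OF h3 w])
  have generic: "card D = 12 * card (hessian_j ` D - B) + card {u\<in>D. hessian_j u \<in> B}"
    by (rule card_fibres_outside)
      (auto simp: B_def D_def card_generic_hessian_j_fibre[OF h3 w])
  have image: "card (hessian_j ` D) = card (hessian_j ` D - B) + card (hessian_j ` D \<inter> B)"
    using card_Int_Diff[of "hessian_j ` D" B] by simp
  have E0: "card (E 0) = (if (2::'a) = 0 then 1 else 4)"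
    using card_hessian_j_eq_0_set[OF h3 w] by (simp add: E_def D_def)
  then have "E 0 \<noteq> {}" by (auto split: if_splits)
  then have "0 \<in> hessian_j ` D" by (auto simp: E_def)
  show ?thesis
  proof (cases "(2::'a) = 0")
    case True
    moreover have "(1728::'a) = 2 * 864" by simp
    ultimately have "B = {0}" by (simp add: B_def)
    then have "{u\<in>D. hessian_j u \<in> B} = E 0" "hessian_j ` D \<inter> B = {0}"
      using \<open>0 \<in> hessian_j ` D\<close> by (auto simp: E_def)
    then show ?thesis using generic image card_D E0 True unfolding D_def by simp
  next
    case False
    have "(1728::'a) \<noteq> 0" using smooth_numeral_ne_zero[OF False h3, of 6 3] by simp
    then have "{u\<in>D. hessian_j u \<in> B} = E 0 \<union> E 1728" "E 0 \<inter> E 1728 = {}"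
      by (auto simp: B_def E_def)
    then have exceptional: "card {u\<in>D. hessian_j u \<in> B} = card (E 0) + card (E 1728)"
      by (simp add: card_Un_disjoint E_def)
    have "hessian_j ` D \<inter> B = insert 0 (if E 1728 = {} then {} else {1728})"
      using \<open>0 \<in> hessian_j ` D\<close> by (auto simp: B_def E_def)
    then have "card (hessian_j ` D \<inter> B) = (if E 1728 = {} then 1 else 2)"
      using \<open>(1728::'a) \<noteq> 0\<close> by simp
    moreover have "card (E 1728) \<in> {0, 6}"
      using card_hessian_j_eq_1728_set[OF h3 w False] by (simp add: E_def D_def)
    ultimately show ?thesis
      using generic image card_D E0 False exceptional unfolding D_def by auto
  qed
qed

theorem mainTheorem12:
  fixes q :: nat
  assumes "q = card (UNIV :: 'a set)"
  shows "J_H TYPE('a::{finite,field}) =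
           (if q mod 3 = 0 then q - 1
            else if q mod 3 = 1 then (q + 11) div 12
            else q div 2)"
proof -
  have J: "J_H TYPE('a) = card (hessian_j ` {u::'a. u^3 \<noteq> 27})" by (simp add: J_H_def)
  consider (char3) "(3::'a) = 0" | (root) "(3::'a) \<noteq> 0" "\<exists>w::'a. w^2 + w + 1 = 0"
    | (no_root) "(3::'a) \<noteq> 0" "\<nexists>w::'a. w^2 + w + 1 = 0" by blast
  then show ?thesis
  proof cases
    case char3
    then have "q mod 3 = 0" using card_mod3_of_char3[OF char3] assms by simp
    then show ?thesis using J card_hessian_j_char3[OF char3] assms by simp
  next
    case root
    then obtain w :: 'a where w: "w^2 + w + 1 = 0" by blast
    then have "q mod 3 = 1" using card_mod3_of_cube_root_of_unity[OF root(1)] assms by simp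
    then show ?thesis using J card_hessian_j_cube_root[OF root(1) w] assms by simp
  next
    case no_root
    have "q mod 3 \<noteq> 0" using card_mod3_of_not_char3[OF no_root(1)] assms by simp
    moreover have "q mod 3 \<noteq> 1" using cube_root_of_unity_exists[where 'a='a] no_root(2) assms by auto
    ultimately have "q mod 3 = 2" by presburger
    then show ?thesis using J card_hessian_j_no_cube_root[OF no_root] assms by simp
  qed
qed

end
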